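(* Let $\sigma>0$, $\eta>0$, $\hat{\alpha}>0$, $h>0$, $r\ge 0$ and $a\in\mathbb{R}$ be constants. Then there exist a constant $\beta^*>0$ and a function $v\in C^1[0,\infty)$ such that $$\beta^* = -\frac{\hat{\alpha}}{4}v(y)^2 + \frac{1}{2}\sigma^2 v'(y) - \eta y\, v(y) + a\, v(y) + h y \quad \text{for all } y\ge 0,$$ $v(0)=-r$, $v$ is nondecreasing on $[0,\infty)$, and $\lim_{y\to\infty} v(y) = h/\eta$.
   Context: This is the (differentiated) Bellman equation of a one-dimensional drift-rate control problem: $\sigma^2$ is the variance and $a$ the drift of a Brownian motion, $\eta$ a mean-reversion rate, $\hat{\alpha}$ a quadratic control-cost parameter (control cost $x^2/\hat{\alpha}$), $h$ a holding-cost rate and $r$ a reflection (idleness) cost rate. *)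

theory Defs
  imports "HOL-Analysis.Analysis"
begin

end

(*
  Writing v = h/eta - k * w with k = 2 sigma^2/alpha turns the equation into the Riccati equation
  w' = (A y + B) w - R - w^2, where A = 2 eta/sigma^2, B = (alpha h/eta - 2 a)/sigma^2 and
  beta = sigma^4/alpha * R + h/eta * (a - alpha h/(4 eta)); the condition v 0 = -r becomes
  w 0 = rho = (h/eta + r)/k. With w = F'/F it linearises to F'' = (A y + B) F' - R F, F 0 = 1,
  F' 0 = rho, whose solution is an entire power series depending continuously on (R, y).

  Shooting in R: the parameters for which F changes sign on [0, oo), and those for which w
  overshoots the line (A y + B)/2 at a point where its square exceeds R + A/2, form disjoint open
  sets. The second contains R = 0, the first every large R (Sturm comparison with sin (pi y)), so
  by connectedness some R > 0 lies in neither. For it F > 0, w > 0 and w' < 0 on [0, oo), and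
  w tends to 0; hence v increases from -r to h/eta, and at the zero c of v the equation reads
  beta = sigma^2/2 * v'(c) + h c > 0.
*)

theory Submission
  imports Defs
begin

section \<open>Sign changes of real functions\<close>

lemma exists_first_zero:
  fixes g :: "real \<Rightarrow> real"
  assumes cont: "continuous_on {a..b} g" and "g a < 0" "g b \<ge> 0" "a \<le> b"
  obtains c where "a < c" "c \<le> b" "g c = 0" "\<And>t. a \<le> t \<Longrightarrow> t < c \<Longrightarrow> g t < 0"
proof -
  define S where "S = {x. a \<le> x \<and> x \<le> b \<and> g x \<ge> 0}"
  have "S = {a..b} \<inter> g -` {0..}" by (auto simp: S_def)
  then have "closed S" by (auto intro: continuous_closed_preimage cont)
  moreover have bdd: "bdd_below S" by (auto simp: S_def bdd_below_def)
  moreover have "b \<in> S" using assms by (auto simp: S_def)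
  ultimately have cS: "Inf S \<in> S" using closed_contains_Inf by blast
  have below: "g t < 0" if "a \<le> t" "t < Inf S" for t
    using that cS cInf_lower[OF _ bdd, of t] by (force simp: S_def)
  have ca: "a < Inf S" using cS \<open>g a < 0\<close> by (auto simp: S_def order.strict_iff_order)
  have "g (Inf S) = 0"
  proof (rule ccontr)
    assume "g (Inf S) \<noteq> 0"
    then have pos: "g (Inf S) > 0" using cS by (simp add: S_def)
    have "continuous_on {a..Inf S} g" by (rule continuous_on_subset[OF cont]) (use cS in \<open>auto simp: S_def\<close>)
    then obtain x where x: "a \<le> x" "x \<le> Inf S" "g x = 0"
      using IVT'[of g a 0 "Inf S"] \<open>g a < 0\<close> pos ca by auto
    then show False using below[OF x(1)] pos by (cases "x = Inf S") auto
  qed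
  with that ca cS below show ?thesis by (auto simp: S_def)
qed

lemma neg_if_first_zeros_decreasing:
  fixes g g' :: "real \<Rightarrow> real"
  assumes der: "\<And>y. y \<ge> a \<Longrightarrow> (g has_real_derivative g' y) (at y)"
    and start: "g a < 0"
    and cross: "\<And>c. c > a \<Longrightarrow> g c = 0 \<Longrightarrow> (\<forall>t\<in>{a..<c}. g t < 0) \<Longrightarrow> g' c < 0"
    and b: "b \<ge> a"
  shows "g b < 0"
proof (rule ccontr)
  assume "\<not> g b < 0"
  moreover have "continuous_on {a..b} g"
    using der by (intro DERIV_continuous_on) (auto intro: has_field_derivative_at_within)
  ultimately obtain c where c: "a < c" "g c = 0" "\<And>t. a \<le> t \<Longrightarrow> t < c \<Longrightarrow> g t < 0"
    using exists_first_zero[of a b g] start b by (metis linorder_not_less)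
  then have "g' c < 0" using cross by auto
  then obtain d where d: "d > 0" "\<And>h. h > 0 \<Longrightarrow> h < d \<Longrightarrow> g c < g (c - h)"
    using DERIV_neg_dec_left[OF der[of c]] c(1) by force
  define h where "h = min d (c - a) / 2"
  have "h > 0" "h < d" "h \<le> c - a" using d c(1) by (auto simp: h_def)
  then show False using c(2) c(3)[of "c - h"] d(2)[of h] by simp
qed

lemma neg_if_zeros_decreasing:
  fixes g g' :: "real \<Rightarrow> real"
  assumes der: "\<And>y. y \<ge> a \<Longrightarrow> (g has_real_derivative g' y) (at y)"
    and start: "g a \<le> 0"
    and cross: "\<And>c. c \<ge> a \<Longrightarrow> g c = 0 \<Longrightarrow> g' c < 0"
    and b: "b > a"
  shows "g b < 0"
proof (cases "g a < 0")
  case True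
  show ?thesis by (rule neg_if_first_zeros_decreasing[OF der True]) (use cross b in auto)
next
  case False
  then have ga: "g a = 0" using start by simp
  obtain d where d: "d > 0" "\<And>h. h > 0 \<Longrightarrow> h < d \<Longrightarrow> g a > g (a + h)"
    using DERIV_neg_dec_right[OF der[of a] cross[OF _ ga]] by force
  define h where "h = min d (b - a) / 2"
  have h: "h > 0" "h < d" "h < b - a" using d b by (auto simp: h_def)
  have "g (a + h) < 0" using d(2)[OF h(1,2)] ga by simp
  from neg_if_first_zeros_decreasing[OF der this] show ?thesis using cross h by auto
qed

lemma exists_zero_if_tendsto_pos:
  fixes v :: "real \<Rightarrow> real"
  assumes "continuous_on {0..} v" "v 0 \<le> 0" "(v \<longlongrightarrow> H) at_top" "H > 0"
  obtains c where "c \<ge> 0" "v c = 0"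
proof -
  have "eventually (\<lambda>y. v y > 0) at_top"
    using order_tendstoD(1)[OF assms(3,4)] .
  then obtain Y where "Y \<ge> 0" "v Y > 0"
    by (metis eventually_at_top_linorder linorder_linear order_refl)
  moreover have "continuous_on {0..Y} v" using assms(1) by (rule continuous_on_subset) auto
  ultimately show ?thesis using IVT'[of v 0 0 Y] assms(2) that by auto
qed

section \<open>The power series solution\<close>

text \<open>Taylor coefficients at \<open>0\<close> of the solution of \<open>F'' = (A * y + B) * F' - R * F\<close>,
  \<open>F 0 = 1\<close>, \<open>F' 0 = \<rho>\<close>.\<close>
fun ode_coeff :: "real \<Rightarrow> real \<Rightarrow> real \<Rightarrow> real \<Rightarrow> nat \<Rightarrow> real" where
  "ode_coeff A B \<rho> R 0 = 1"
| "ode_coeff A B \<rho> R (Suc 0) = \<rho>"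
| "ode_coeff A B \<rho> R (Suc (Suc n)) =
     (B * real (Suc n) * ode_coeff A B \<rho> R (Suc n) + (A * real n - R) * ode_coeff A B \<rho> R n)
       / (real (Suc n) * real (Suc (Suc n)))"

lemma sqrt_fact_Suc: "sqrt (fact (Suc n)) = sqrt (fact n) * sqrt (real n + 1)"
proof -
  have "(fact (Suc n) :: real) = fact n * (real n + 1)" by (simp add: algebra_simps)
  then show ?thesis by (simp add: real_sqrt_mult)
qed

lemma ode_coeff_numerator_bound:
  fixes A B R L P c0 c1 :: real
  assumes A: "A \<ge> 0" and c0: "\<bar>c0\<bar> \<le> P" and c1: "\<bar>c1\<bar> \<le> P * L / sqrt (real n + 1)"
  shows "\<bar>B * real (Suc n) * c1 + (A * real n - R) * c0\<bar>
           \<le> P * sqrt (real n + 1) * (\<bar>B\<bar> * L + (A + \<bar>R\<bar>) * sqrt (real n + 1))"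
proof -
  define u where "u = sqrt (real n + 1)"
  have u: "u \<ge> 1" "u * u = real (Suc n)" by (simp_all add: u_def)
  have "\<bar>A * real n - R\<bar> \<le> A * real n + \<bar>R\<bar>"
    using abs_triangle_ineq4[of "A * real n" R] A by simp
  also have "\<dots> \<le> (A + \<bar>R\<bar>) * (u * u)"
    using A u(2) by (simp add: algebra_simps)
  finally have t0: "\<bar>(A * real n - R) * c0\<bar> \<le> (A + \<bar>R\<bar>) * (u * u) * P"
    unfolding abs_mult using c0 by (intro mult_mono) auto
  have "\<bar>B * real (Suc n) * c1\<bar> = \<bar>B\<bar> * (u * u) * \<bar>c1\<bar>" by (simp add: abs_mult u(2))
  also have "\<dots> \<le> \<bar>B\<bar> * (u * u) * (P * L / u)" using c1 u_def by (intro mult_left_mono) auto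
  finally have t1: "\<bar>B * real (Suc n) * c1\<bar> \<le> \<bar>B\<bar> * (u * u) * (P * L / u)" .
  have "\<bar>B * real (Suc n) * c1 + (A * real n - R) * c0\<bar>
      \<le> \<bar>B\<bar> * (u * u) * (P * L / u) + (A + \<bar>R\<bar>) * (u * u) * P"
    using abs_triangle_ineq[of "B * real (Suc n) * c1" "(A * real n - R) * c0"] t0 t1 by linarith
  also have "\<dots> = P * u * (\<bar>B\<bar> * L + (A + \<bar>R\<bar>) * u)" using u(1) by (simp add: field_simps)
  finally show ?thesis by (simp add: u_def)
qed

lemma ode_coeff_step_bound:
  fixes A B R L P c0 c1 :: real
  assumes A: "A \<ge> 0" and L: "L \<ge> 1" "2 * \<bar>B\<bar> \<le> L" "2 * (A + \<bar>R\<bar>) \<le> L"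
    and c0: "\<bar>c0\<bar> \<le> P" and c1: "\<bar>c1\<bar> \<le> P * L / sqrt (real n + 1)"
  shows "\<bar>(B * real (Suc n) * c1 + (A * real n - R) * c0) / (real (Suc n) * real (Suc (Suc n)))\<bar>
           \<le> P * L^2 / (sqrt (real n + 1) * sqrt (real n + 2))"
proof -
  define u where "u = sqrt (real n + 1)"
  define v where "v = sqrt (real n + 2)"
  have u: "u \<ge> 1" "u * u = real (Suc n)" and v: "v \<ge> u" "v * v = real (Suc (Suc n))"
    by (simp_all add: u_def v_def)
  have "\<bar>B\<bar> * L \<le> (L / 2) * (L * v)" using L u v by (intro mult_mono) auto
  moreover have "(A + \<bar>R\<bar>) * u \<le> (L / 2) * (L * v)"
  proof (intro mult_mono)
    have "1 * v \<le> L * v" using L u v by (intro mult_right_mono) auto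
    then show "u \<le> L * v" using v by simp
  qed (use L u A in auto)
  ultimately have "\<bar>B\<bar> * L + (A + \<bar>R\<bar>) * u \<le> L^2 * v" by (simp add: power2_eq_square)
  then have "\<bar>B * real (Suc n) * c1 + (A * real n - R) * c0\<bar> \<le> P * u * (L^2 * v)"
    using ode_coeff_numerator_bound[OF A c0 c1, of B R] c0 u(1)
    unfolding u_def[symmetric] by (smt (verit) mult_left_mono mult_nonneg_nonneg)
  moreover have "real (Suc n) * real (Suc (Suc n)) = (u * v) * (u * v)"
    by (simp only: u(2)[symmetric] v(2)[symmetric]) (simp add: algebra_simps)
  ultimately have "\<bar>B * real (Suc n) * c1 + (A * real n - R) * c0\<bar> / (real (Suc n) * real (Suc (Suc n)))
      \<le> P * u * (L^2 * v) / ((u * v) * (u * v))"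
    by (simp only:) (rule divide_right_mono, simp_all)
  also have "\<dots> = P * L^2 / (u * v)" using u(1) v(1) by (simp add: field_simps power2_eq_square)
  finally show ?thesis by (simp add: abs_divide u_def v_def del: of_nat_Suc)
qed

lemma ode_coeff_bound:
  fixes A B \<rho> R Rb :: real
  assumes A: "A \<ge> 0" and Rb: "\<bar>R\<bar> \<le> Rb"
  defines "L \<equiv> 1 + \<bar>\<rho>\<bar> + 2 * \<bar>B\<bar> + 2 * (A + Rb)"
  shows "\<bar>ode_coeff A B \<rho> R n\<bar> \<le> L ^ n / sqrt (fact n)"
proof -
  let ?c = "ode_coeff A B \<rho> R"
  have L: "L \<ge> 1" "2 * \<bar>B\<bar> \<le> L" "2 * (A + \<bar>R\<bar>) \<le> L" "\<bar>\<rho>\<bar> \<le> L"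
    using A Rb by (auto simp: L_def)
  have L_Suc: "L ^ Suc n / sqrt (fact (Suc n)) = L ^ n / sqrt (fact n) * L / sqrt (real n + 1)" for n
    unfolding sqrt_fact_Suc power_Suc by (simp add: field_simps)
  have "\<bar>?c n\<bar> \<le> L ^ n / sqrt (fact n) \<and> \<bar>?c (Suc n)\<bar> \<le> L ^ Suc n / sqrt (fact (Suc n))"
  proof (induction n)
    case 0
    then show ?case using L by simp
  next
    case (Suc n)
    have "\<bar>?c n\<bar> \<le> L ^ n / sqrt (fact n)"
      and "\<bar>?c (Suc n)\<bar> \<le> L ^ n / sqrt (fact n) * L / sqrt (real n + 1)"
      using Suc.IH unfolding L_Suc by auto
    then have "\<bar>?c (Suc (Suc n))\<bar>
        \<le> L ^ n / sqrt (fact n) * L^2 / (sqrt (real n + 1) * sqrt (real n + 2))"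
      unfolding ode_coeff.simps(3) by (rule ode_coeff_step_bound[OF A L(1-3)])
    also have "\<dots> = L ^ Suc (Suc n) / sqrt (fact (Suc (Suc n)))"
      unfolding L_Suc by (simp add: power2_eq_square field_simps)
    finally show ?case using Suc by simp
  qed
  then show ?thesis ..
qed

lemma summable_Suc_mult_power_div_sqrt_fact:
  fixes M :: real
  assumes M: "M \<ge> 0"
  shows "summable (\<lambda>n. real (Suc n) * M ^ n / sqrt (fact n))"
proof (rule summable_ratio_test[where c = "1/2" and N = "nat \<lceil>16 * M^2\<rceil>"])
  fix n assume n: "nat \<lceil>16 * M^2\<rceil> \<le> n"
  then have "(4 * M)^2 < real n + 1" by (simp add: power2_eq_square)
  then have s4: "4 * M < sqrt (real n + 1)"
    using M real_less_rsqrt by blast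
  have sp: "sqrt (real n + 1) > 0" by simp
  have "real (Suc (Suc n)) * M ^ Suc n / sqrt (fact (Suc n))
        = (real (Suc (Suc n)) * M / (real (Suc n) * sqrt (real n + 1))) * (real (Suc n) * M ^ n / sqrt (fact n))"
    unfolding sqrt_fact_Suc power_Suc using sp by (simp add: field_simps del: of_nat_Suc)
  also have "\<dots> \<le> (1/2) * (real (Suc n) * M ^ n / sqrt (fact n))"
  proof (rule mult_right_mono)
    have "real (Suc (Suc n)) * M \<le> 2 * real (Suc n) * M" using M by (simp add: mult_right_mono)
    also have "\<dots> \<le> (1/2) * (real (Suc n) * sqrt (real n + 1))"
    proof -
      have "real (Suc n) * (4 * M) \<le> real (Suc n) * sqrt (real n + 1)"
        using s4 by (intro mult_left_mono) auto
      then show ?thesis by (simp add: field_simps)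
    qed
    finally have "real (Suc (Suc n)) * M \<le> 1/2 * (real (Suc n) * sqrt (real n + 1))" .
    moreover have "real (Suc n) * sqrt (real n + 1) > 0" using sp by simp
    ultimately show "real (Suc (Suc n)) * M / (real (Suc n) * sqrt (real n + 1)) \<le> 1/2"
      by (simp add: pos_divide_le_eq)
  qed (use M in simp)
  finally show "norm (real (Suc (Suc n)) * M ^ Suc n / sqrt (fact (Suc n)))
      \<le> 1/2 * norm (real (Suc n) * M ^ n / sqrt (fact n))"
    using M by simp
qed simp

lemma continuous_on_parametric_powser:
  fixes c :: "real \<Rightarrow> nat \<Rightarrow> real"
  assumes cont: "\<And>n. continuous_on UNIV (\<lambda>R. c R n)"
    and majorant: "\<And>Rb K. \<exists>M. summable M \<and>
      (\<forall>n R y. \<bar>R\<bar> \<le> Rb \<longrightarrow> \<bar>y\<bar> \<le> K \<longrightarrow> \<bar>c R n * y^n\<bar> \<le> M n)"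
  shows "continuous_on UNIV (\<lambda>p. \<Sum>n. c (fst p) n * (snd p)^n)"
proof -
  have "isCont (\<lambda>p. \<Sum>n. c (fst p) n * (snd p)^n) p0" for p0 :: "real \<times> real"
  proof -
    define Rb where "Rb = \<bar>fst p0\<bar> + 1"
    define K where "K = \<bar>snd p0\<bar> + 1"
    define S where "S = {p :: real \<times> real. \<bar>fst p\<bar> \<le> Rb \<and> \<bar>snd p\<bar> \<le> K}"
    obtain M where M: "summable M" "\<And>n R y. \<bar>R\<bar> \<le> Rb \<Longrightarrow> \<bar>y\<bar> \<le> K \<Longrightarrow> \<bar>c R n * y^n\<bar> \<le> M n"
      using majorant[of Rb K] by blast
    have "uniform_limit S (\<lambda>N p. \<Sum>i<N. c (fst p) i * (snd p)^i)
        (\<lambda>p. \<Sum>i. c (fst p) i * (snd p)^i) sequentially"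
      by (rule Weierstrass_m_test[OF _ M(1)]) (use M(2) in \<open>auto simp: S_def\<close>)
    moreover have "continuous_on S (\<lambda>p. \<Sum>i<N. c (fst p) i * (snd p)^i)" for N
    proof -
      have "continuous_on S (\<lambda>p. c (fst p) i)" for i
        by (rule continuous_on_compose2[OF cont[of i]]) (auto intro: continuous_intros)
      then show ?thesis by (intro continuous_intros) auto
    qed
    ultimately have "continuous_on S (\<lambda>p. \<Sum>i. c (fst p) i * (snd p)^i)"
      by (intro uniform_limit_theorem) auto
    moreover have "p0 \<in> interior S"
    proof (rule interiorI)
      show "open {p :: real \<times> real. \<bar>fst p\<bar> < Rb \<and> \<bar>snd p\<bar> < K}"
        by (intro open_Collect_conj open_Collect_less continuous_intros)
    qed (auto simp: S_def Rb_def K_def)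
    ultimately show ?thesis using continuous_on_interior by blast
  qed
  then show ?thesis by (simp add: continuous_on_eq_continuous_at)
qed

lemma continuous_on_ode_coeff: "continuous_on UNIV (\<lambda>R. ode_coeff A B \<rho> R n)"
proof -
  have "continuous_on UNIV (\<lambda>R. ode_coeff A B \<rho> R n) \<and>
      continuous_on UNIV (\<lambda>R. ode_coeff A B \<rho> R (Suc n))"
  proof (induction n)
    case 0
    then show ?case by (simp add: continuous_on_const)
  next
    case (Suc n)
    then show ?case by (simp del: of_nat_Suc) (intro continuous_intros; simp)
  qed
  then show ?thesis ..
qed

lemma energy_form_nonneg:
  fixes p q s R T :: real
  assumes "\<bar>s\<bar> \<le> T"
  shows "2 * p * q + 2 * q * (s * q - R * p) + (1 + \<bar>R\<bar> + 2 * T) * (p^2 + q^2) \<ge> 0"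
proof -
  have e1: "2 * p * q + (p^2 + q^2) \<ge> 0"
    using zero_le_power2[of "p + q"] by (simp add: power2_eq_square algebra_simps)
  have pq: "2 * \<bar>p\<bar> * \<bar>q\<bar> \<le> p^2 + q^2"
    using zero_le_power2[of "\<bar>p\<bar> - \<bar>q\<bar>"] by (simp add: power2_eq_square algebra_simps)
  have "\<bar>2 * R * p * q\<bar> = \<bar>R\<bar> * (2 * \<bar>p\<bar> * \<bar>q\<bar>)" by (simp add: abs_mult)
  also have "\<dots> \<le> \<bar>R\<bar> * (p^2 + q^2)" by (rule mult_left_mono[OF pq]) simp
  finally have e2: "- 2 * R * p * q + \<bar>R\<bar> * (p^2 + q^2) \<ge> 0" by linarith
  have "s * q^2 \<ge> - T * q^2" using assms by (intro mult_right_mono) auto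
  moreover have "T * p^2 \<ge> 0" using assms by simp
  ultimately have e3: "2 * s * q^2 + 2 * T * (p^2 + q^2) \<ge> 0" by (simp add: algebra_simps)
  have "2 * p * q + 2 * q * (s * q - R * p) + (1 + \<bar>R\<bar> + 2 * T) * (p^2 + q^2)
      = (2 * p * q + (p^2 + q^2)) + (- 2 * R * p * q + \<bar>R\<bar> * (p^2 + q^2)) + (2 * s * q^2 + 2 * T * (p^2 + q^2))"
    by (simp add: power2_eq_square algebra_simps)
  then show ?thesis using e1 e2 e3 by linarith
qed

locale linear_ode =
  fixes A B \<rho> :: real
  assumes A_pos: "A > 0"
begin

abbreviation coeff :: "real \<Rightarrow> nat \<Rightarrow> real" where
  "coeff R \<equiv> ode_coeff A B \<rho> R"

definition F :: "real \<Rightarrow> real \<Rightarrow> real" where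
  "F R y = (\<Sum>n. coeff R n * y^n)"

definition F' :: "real \<Rightarrow> real \<Rightarrow> real" where
  "F' R y = (\<Sum>n. diffs (coeff R) n * y^n)"

definition F'' :: "real \<Rightarrow> real \<Rightarrow> real" where
  "F'' R y = (\<Sum>n. diffs (diffs (coeff R)) n * y^n)"

lemma coeff_term_bound:
  fixes Rb K :: real
  defines "L \<equiv> 1 + \<bar>\<rho>\<bar> + 2 * \<bar>B\<bar> + 2 * (A + Rb)"
  assumes "\<bar>R\<bar> \<le> Rb" "\<bar>y\<bar> \<le> K"
  shows "\<bar>coeff R n * y^n\<bar> \<le> real (Suc n) * (L * K) ^ n / sqrt (fact n)"
    and "\<bar>diffs (coeff R) n * y^n\<bar> \<le> L * (real (Suc n) * (L * K) ^ n / sqrt (fact n))"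
proof -
  have L: "L \<ge> 1" using assms A_pos by (simp add: L_def)
  have c: "\<bar>coeff R m\<bar> \<le> L ^ m / sqrt (fact m)" for m
    unfolding L_def by (rule ode_coeff_bound) (use A_pos assms in auto)
  have yK: "\<bar>y\<bar>^n \<le> K^n" using assms by (simp add: power_mono)
  have "\<bar>coeff R n * y^n\<bar> \<le> (L ^ n / sqrt (fact n)) * K^n"
    unfolding abs_mult power_abs by (rule mult_mono[OF c yK]) (use L in auto)
  also have "\<dots> = (L * K) ^ n / sqrt (fact n)" by (simp add: power_mult_distrib)
  also have "\<dots> \<le> real (Suc n) * ((L * K) ^ n / sqrt (fact n))"
  proof -
    have "0 \<le> (L * K) ^ n / sqrt (fact n)" using L assms by simp
    then have "1 * ((L * K) ^ n / sqrt (fact n)) \<le> real (Suc n) * ((L * K) ^ n / sqrt (fact n))"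
      by (intro mult_right_mono) auto
    then show ?thesis by simp
  qed
  finally show "\<bar>coeff R n * y^n\<bar> \<le> real (Suc n) * (L * K) ^ n / sqrt (fact n)" by simp
  have "\<bar>diffs (coeff R) n * y^n\<bar> = real (Suc n) * \<bar>coeff R (Suc n)\<bar> * \<bar>y\<bar>^n"
    by (simp add: diffs_def abs_mult power_abs)
  also have "\<dots> \<le> real (Suc n) * (L ^ Suc n / sqrt (fact (Suc n))) * K^n"
    by (intro mult_mono mult_left_mono c yK) (use L in auto)
  also have "\<dots> \<le> real (Suc n) * (L ^ Suc n / sqrt (fact n)) * K^n"
    using L assms by (intro mult_right_mono mult_left_mono divide_left_mono) auto
  also have "\<dots> = L * (real (Suc n) * (L * K) ^ n / sqrt (fact n))"
    by (simp add: power_mult_distrib)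
  finally show "\<bar>diffs (coeff R) n * y^n\<bar> \<le> L * (real (Suc n) * (L * K) ^ n / sqrt (fact n))" .
qed

lemma summable_F: "summable (\<lambda>n. coeff R n * y^n)"
proof (rule summable_comparison_test)
  define L where "L = 1 + \<bar>\<rho>\<bar> + 2 * \<bar>B\<bar> + 2 * (A + \<bar>R\<bar>)"
  show "\<exists>N. \<forall>n\<ge>N. norm (coeff R n * y^n) \<le> real (Suc n) * (L * \<bar>y\<bar>) ^ n / sqrt (fact n)"
    using coeff_term_bound(1)[of R "\<bar>R\<bar>" y "\<bar>y\<bar>"] by (auto simp: L_def)
  show "summable (\<lambda>n. real (Suc n) * (L * \<bar>y\<bar>) ^ n / sqrt (fact n))"
    by (rule summable_Suc_mult_power_div_sqrt_fact) (use A_pos in \<open>simp add: L_def\<close>)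
qed

lemma summable_F': "summable (\<lambda>n. diffs (coeff R) n * y^n)"
  by (rule termdiff_converges_all) (rule summable_F)

lemma summable_F'': "summable (\<lambda>n. diffs (diffs (coeff R)) n * y^n)"
  by (rule termdiff_converges_all) (rule summable_F')

lemma F_has_real_derivative: "(F R has_real_derivative F' R y) (at y)"
  unfolding F_def[abs_def] F'_def
  by (rule termdiffs_strong_converges_everywhere) (rule summable_F)

lemma F'_has_real_derivative: "(F' R has_real_derivative F'' R y) (at y)"
  unfolding F'_def[abs_def] F''_def
  by (rule termdiffs_strong_converges_everywhere) (rule summable_F')

lemma F_at_0: "F R 0 = 1"
  using powser_sums_zero[of "coeff R"] by (simp add: F_def sums_iff)

lemma F'_at_0: "F' R 0 = \<rho>"
  using powser_sums_zero[of "diffs (coeff R)"] by (simp add: F'_def sums_iff diffs_def)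

lemma F_ode: "F'' R y = (A * y + B) * F' R y - R * F R y"
proof -
  let ?c = "coeff R"
  have s0: "(\<lambda>n. ?c n * y^n) sums F R y"
    unfolding F_def using summable_F by (rule summable_sums)
  have s1: "(\<lambda>n. diffs ?c n * y^n) sums F' R y"
    unfolding F'_def using summable_F' by (rule summable_sums)
  have s2: "(\<lambda>n. diffs (diffs ?c) n * y^n) sums F'' R y"
    unfolding F''_def using summable_F'' by (rule summable_sums)
  have "(\<lambda>n. y * (diffs ?c n * y^n)) sums (y * F' R y)" by (rule sums_mult[OF s1])
  then have "(\<lambda>n. (\<lambda>m. real m * ?c m * y^m) (Suc n)) sums (y * F' R y)"
    by (simp add: diffs_def algebra_simps)
  then have s3: "(\<lambda>m. real m * ?c m * y^m) sums (y * F' R y)"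
    by (subst (asm) sums_Suc_iff) simp
  have c'': "diffs (diffs ?c) n = B * real (Suc n) * ?c (Suc n) + (A * real n - R) * ?c n" for n
  proof -
    have "real (Suc n) * real (Suc (Suc n)) \<noteq> 0" by (simp del: of_nat_Suc)
    then show ?thesis by (simp add: diffs_def del: of_nat_Suc)
  qed
  have "diffs (diffs ?c) n * y^n
      = B * (diffs ?c n * y^n) + A * (real n * ?c n * y^n) - R * (?c n * y^n)" for n
    unfolding c'' by (simp add: diffs_def algebra_simps)
  moreover have "(\<lambda>n. B * (diffs ?c n * y^n) + A * (real n * ?c n * y^n) - R * (?c n * y^n)) sums
          (B * F' R y + A * (y * F' R y) - R * F R y)"
    by (intro sums_add sums_diff sums_mult s0 s1 s3)
  ultimately have "(\<lambda>n. diffs (diffs ?c) n * y^n) sums (B * F' R y + A * (y * F' R y) - R * F R y)"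
    by simp
  then show ?thesis using s2 sums_unique2 by (fastforce simp: algebra_simps)
qed

lemma continuous_on_F: "continuous_on UNIV (\<lambda>p. F (fst p) (snd p))"
  unfolding F_def
proof (rule continuous_on_parametric_powser[OF continuous_on_ode_coeff])
  fix Rb K :: real
  define L where "L = 1 + \<bar>\<rho>\<bar> + 2 * \<bar>B\<bar> + 2 * (A + \<bar>Rb\<bar>)"
  show "\<exists>M. summable M \<and>
      (\<forall>n R y. \<bar>R\<bar> \<le> Rb \<longrightarrow> \<bar>y\<bar> \<le> K \<longrightarrow> \<bar>coeff R n * y ^ n\<bar> \<le> M n)"
  proof (intro exI conjI allI impI)
    show "summable (\<lambda>n. real (Suc n) * (L * \<bar>K\<bar>) ^ n / sqrt (fact n))"
      by (rule summable_Suc_mult_power_div_sqrt_fact) (use A_pos in \<open>simp add: L_def\<close>)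
    fix n R y assume "\<bar>R\<bar> \<le> Rb" "\<bar>y\<bar> \<le> K"
    then show "\<bar>coeff R n * y ^ n\<bar> \<le> real (Suc n) * (L * \<bar>K\<bar>) ^ n / sqrt (fact n)"
      using coeff_term_bound(1)[of R "\<bar>Rb\<bar>" y "\<bar>K\<bar>" n] by (auto simp: L_def)
  qed
qed

lemma continuous_on_F': "continuous_on UNIV (\<lambda>p. F' (fst p) (snd p))"
  unfolding F'_def
proof (rule continuous_on_parametric_powser)
  show "continuous_on UNIV (\<lambda>R. diffs (coeff R) n)" for n
    unfolding diffs_def by (intro continuous_intros continuous_on_ode_coeff)
  fix Rb K :: real
  define L where "L = 1 + \<bar>\<rho>\<bar> + 2 * \<bar>B\<bar> + 2 * (A + \<bar>Rb\<bar>)"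
  have L: "L \<ge> 1" using A_pos by (simp add: L_def)
  show "\<exists>M. summable M \<and>
      (\<forall>n R y. \<bar>R\<bar> \<le> Rb \<longrightarrow> \<bar>y\<bar> \<le> K \<longrightarrow> \<bar>diffs (coeff R) n * y ^ n\<bar> \<le> M n)"
  proof (intro exI conjI allI impI)
    show "summable (\<lambda>n. L * (real (Suc n) * (L * \<bar>K\<bar>) ^ n / sqrt (fact n)))"
      by (intro summable_mult summable_Suc_mult_power_div_sqrt_fact) (use L in simp)
    fix n R y assume "\<bar>R\<bar> \<le> Rb" "\<bar>y\<bar> \<le> K"
    then show "\<bar>diffs (coeff R) n * y ^ n\<bar> \<le> L * (real (Suc n) * (L * \<bar>K\<bar>) ^ n / sqrt (fact n))"
      using coeff_term_bound(2)[of R "\<bar>Rb\<bar>" y "\<bar>K\<bar>" n] by (auto simp: L_def)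
  qed
qed

lemma continuous_on_F_param: "continuous_on UNIV (\<lambda>R. F R y)"
  using continuous_on_compose2[OF continuous_on_F, of UNIV "\<lambda>R. (R, y)"]
  by (simp add: continuous_on_Pair continuous_on_const continuous_on_id)

lemma continuous_on_F'_param: "continuous_on UNIV (\<lambda>R. F' R y)"
  using continuous_on_compose2[OF continuous_on_F', of UNIV "\<lambda>R. (R, y)"]
  by (simp add: continuous_on_Pair continuous_on_const continuous_on_id)

definition half_drift :: "real \<Rightarrow> real" where
  "half_drift y = (A * y + B) / 2"

text \<open>A zero of a nonnegative solution is a double zero, which the exponential growth bound
  on \<open>F\<^sup>2 + F'\<^sup>2\<close> excludes.\<close>
lemma F_pos_if_nonneg:
  assumes nonneg: "\<And>y. y \<ge> 0 \<Longrightarrow> F R y \<ge> 0" and y: "y \<ge> 0"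
  shows "F R y > 0"
proof (rule ccontr)
  assume "\<not> F R y > 0"
  then have Fy: "F R y = 0" using nonneg[OF y] by simp
  then have "y > 0" using F_at_0[of R] y by (cases "y = 0") auto
  then have F'y: "F' R y = 0"
    by (intro DERIV_local_min[OF F_has_real_derivative, of y y]) (use nonneg Fy in auto)
  define C where "C = 1 + \<bar>R\<bar> + 2 * (A * y + \<bar>B\<bar>)"
  define G where "G = (\<lambda>t. ((F R t)^2 + (F' R t)^2) * exp (C * t))"
  have G': "(G has_real_derivative
      (2 * F R t * F' R t + 2 * F' R t * F'' R t + C * ((F R t)^2 + (F' R t)^2)) * exp (C * t)) (at t)" for t
    unfolding G_def
    by (rule derivative_eq_intros F_has_real_derivative F'_has_real_derivative refl | simp)+
       (simp add: algebra_simps)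
  have "G 0 \<le> G y"
  proof (rule DERIV_nonneg_imp_nondecreasing[of 0 y])
    fix t assume t: "0 \<le> t" "t \<le> y"
    have "\<bar>A * t\<bar> \<le> A * y" using t A_pos by (simp add: abs_mult mult_left_mono)
    then have "\<bar>A * t + B\<bar> \<le> A * y + \<bar>B\<bar>" by linarith
    from energy_form_nonneg[OF this, of "F R t" "F' R t" R]
    have "2 * F R t * F' R t + 2 * F' R t * F'' R t + C * ((F R t)^2 + (F' R t)^2) \<ge> 0"
      unfolding F_ode C_def by (simp add: algebra_simps)
    then show "\<exists>d. (G has_real_derivative d) (at t) \<and> d \<ge> 0"
      using G' by (meson exp_ge_zero mult_nonneg_nonneg)
  qed (use y in auto)
  moreover have "G y = 0" using Fy F'y by (simp add: G_def)
  moreover have "G 0 > 0" using F_at_0 by (simp add: G_def add_pos_nonneg)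
  ultimately show False by simp
qed

text \<open>The Wronskian of \<open>sin (pi * y)\<close> and the Liouville transform \<open>exp (- \<psi> y) * F R y\<close>,
  which solves \<open>u'' + (R + A/2 - half_drift y ^ 2) * u = 0\<close>.\<close>
lemma Wronskian_sin_has_real_derivative:
  defines "\<psi> \<equiv> \<lambda>y. A * y^2 / 4 + B * y / 2"
  shows "((\<lambda>y. exp (- \<psi> y) * (sin (pi * y) * (F' R y - half_drift y * F R y) - pi * cos (pi * y) * F R y))
          has_real_derivative
          exp (- \<psi> y) * sin (pi * y) * F R y * (pi^2 - (R + A/2 - (half_drift y)^2))) (at y)"
proof -
  let ?L = half_drift
  have "((\<lambda>y. exp (- \<psi> y) * (sin (pi * y) * (F' R y - ?L y * F R y) - pi * cos (pi * y) * F R y))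
      has_real_derivative
      exp (- \<psi> y) * (- ((A * (2 * y) / 4 + B / 2))) * (sin (pi * y) * (F' R y - ?L y * F R y) - pi * cos (pi * y) * F R y)
      + exp (- \<psi> y) * ((cos (pi * y) * pi) * (F' R y - ?L y * F R y)
          + sin (pi * y) * (F'' R y - (A / 2 * F R y + ?L y * F' R y))
          - pi * ((- sin (pi * y) * pi) * F R y + cos (pi * y) * F' R y))) (at y)"
    (is "(_ has_real_derivative ?D) _")
    unfolding \<psi>_def half_drift_def
    by (rule derivative_eq_intros F_has_real_derivative F'_has_real_derivative refl | simp)+
       (simp add: algebra_simps)
  moreover have "?D = exp (- \<psi> y) * sin (pi * y) * F R y * (pi^2 - (R + A/2 - (?L y)^2))"
    unfolding F_ode half_drift_def by (simp add: field_simps power2_eq_square)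
  ultimately show ?thesis by simp
qed

lemma F_nonpos_on_unit_interval:
  assumes R: "R \<ge> ((A + \<bar>B\<bar>)/2)^2 + pi^2"
  shows "\<exists>y\<in>{0..1}. F R y \<le> 0"
proof (rule ccontr)
  assume "\<not> (\<exists>y\<in>{0..1}. F R y \<le> 0)"
  then have pos: "\<And>y. 0 \<le> y \<Longrightarrow> y \<le> 1 \<Longrightarrow> F R y > 0" by force
  define \<psi> where "\<psi> = (\<lambda>y::real. A * y^2 / 4 + B * y / 2)"
  define W where "W = (\<lambda>y. exp (- \<psi> y) *
    (sin (pi * y) * (F' R y - half_drift y * F R y) - pi * cos (pi * y) * F R y))"
  have "W 1 \<le> W 0"
  proof (rule DERIV_nonpos_imp_nonincreasing[of 0 1])
    fix y :: real assume y: "0 \<le> y" "y \<le> 1"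
    have "\<bar>A * y\<bar> \<le> A" using y A_pos by (simp add: abs_mult mult_left_le)
    then have "\<bar>half_drift y\<bar> \<le> (A + \<bar>B\<bar>)/2" by (simp add: half_drift_def)
    then have "(half_drift y)^2 \<le> ((A + \<bar>B\<bar>)/2)^2" by (metis abs_ge_zero power2_abs power_mono)
    then have "pi^2 - (R + A/2 - (half_drift y)^2) \<le> 0" using R A_pos by linarith
    moreover have "exp (- \<psi> y) * sin (pi * y) * F R y \<ge> 0"
      using pos[OF y] sin_ge_zero[of "pi * y"] y by simp
    ultimately show "\<exists>d. (W has_real_derivative d) (at y) \<and> d \<le> 0"
      using Wronskian_sin_has_real_derivative[of R y]
      unfolding W_def \<psi>_def by (meson mult_nonneg_nonpos)
  qed simp
  moreover have "W 0 = - pi" by (simp add: W_def \<psi>_def F_at_0)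
  moreover have "W 1 > 0" using pos[of 1] by (simp add: W_def)
  ultimately show False using pi_gt_zero by linarith
qed

end

section \<open>Shooting in the parameter \<open>R\<close>\<close>

context linear_ode
begin

definition w :: "real \<Rightarrow> real \<Rightarrow> real" where
  "w R y = F' R y / F R y"

text \<open>The right-hand side of the Riccati equation; it is the derivative of \<open>w R\<close> only where
  \<open>F R\<close> does not vanish.\<close>
definition w' :: "real \<Rightarrow> real \<Rightarrow> real" where
  "w' R y = (A * y + B) * w R y - R - (w R y)^2"

lemma w_at_0: "w R 0 = \<rho>"
  by (simp add: w_def F_at_0 F'_at_0)

lemma w_has_real_derivative:
  assumes "F R y \<noteq> 0"
  shows "(w R has_real_derivative w' R y) (at y)"
proof -
  have "(w R has_real_derivative (F'' R y * F R y - F' R y * F' R y) / (F R y * F R y)) (at y)"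
    unfolding w_def[abs_def]
    by (rule derivative_eq_intros F_has_real_derivative F'_has_real_derivative refl assms | simp)+
  moreover have "(F'' R y * F R y - F' R y * F' R y) / (F R y * F R y) = w' R y"
    unfolding w'_def w_def F_ode using assms by (simp add: field_simps power2_eq_square)
  ultimately show ?thesis by simp
qed

lemma w'_has_real_derivative:
  assumes "F R y \<noteq> 0"
  shows "(w' R has_real_derivative A * w R y + (A * y + B) * w' R y - 2 * w R y * w' R y) (at y)"
  unfolding w'_def[abs_def]
  by (rule derivative_eq_intros w_has_real_derivative[OF assms] refl | simp)+
     (simp add: w'_def algebra_simps)

definition overshoot :: "real set" where
  "overshoot = {R. \<exists>y\<^sub>1\<ge>0. half_drift y\<^sub>1 > 0 \<and> (half_drift y\<^sub>1)^2 > R + A/2 \<and>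
     (\<forall>t\<in>{0..y\<^sub>1}. F R t > 0) \<and> F' R y\<^sub>1 > half_drift y\<^sub>1 * F R y\<^sub>1}"

definition sign_change :: "real set" where
  "sign_change = {R. \<exists>y\<ge>0. F R y < 0}"

lemma open_sign_change: "open sign_change"
proof -
  have "sign_change = (\<Union>y\<in>{0..}. {R. F R y < 0})" by (auto simp: sign_change_def)
  moreover have "open {R. F R y < 0}" for y
    by (intro open_Collect_less continuous_on_F_param continuous_intros)
  ultimately show ?thesis by auto
qed

lemma open_F_pos_on_interval: "open {R. \<forall>t\<in>{0..y}. F R t > 0}"
proof -
  define S where "S = (UNIV \<times> {0..y}) \<inter> {p. F (fst p) (snd p) \<le> 0}"
  have "closed {p. F (fst p) (snd p) \<le> (0::real)}"
    by (intro closed_Collect_le continuous_on_F continuous_intros)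
  then have "closedin (top_of_set (UNIV \<times> {0..y})) S"
    unfolding S_def by (intro closedin_closed_Int)
  then have "closed (fst ` S)"
    using Starlike.closed_map_fst[of "{0..y}" UNIV S] by auto
  moreover have "{R. \<forall>t\<in>{0..y}. F R t > 0} = - (fst ` S)"
    by (force simp: S_def not_less)
  ultimately show ?thesis by (simp add: open_Compl)
qed

lemma open_overshoot: "open overshoot"
proof -
  have "overshoot = (\<Union>y\<^sub>1\<in>{y\<^sub>1. y\<^sub>1 \<ge> 0 \<and> half_drift y\<^sub>1 > 0}.
     {R. R + A/2 < (half_drift y\<^sub>1)^2} \<inter> {R. \<forall>t\<in>{0..y\<^sub>1}. F R t > 0} \<inter>
     {R. half_drift y\<^sub>1 * F R y\<^sub>1 < F' R y\<^sub>1})"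
    by (auto simp: overshoot_def)
  moreover have "open {R. R + A/2 < (half_drift y\<^sub>1)^2}" for y\<^sub>1
    by (intro open_Collect_less continuous_intros)
  moreover have "open {R. half_drift y\<^sub>1 * F R y\<^sub>1 < F' R y\<^sub>1}" for y\<^sub>1
    by (intro open_Collect_less continuous_on_F_param continuous_on_F'_param continuous_intros)
  ultimately show ?thesis using open_F_pos_on_interval by (auto intro!: open_Int)
qed


lemma w'_pos_persists:
  assumes F_nz: "\<And>y. y \<ge> y\<^sub>1 \<Longrightarrow> F R y \<noteq> 0"
    and w_pos: "w R y\<^sub>1 > 0" and w'_pos: "w' R y\<^sub>1 > 0" and y: "y \<ge> y\<^sub>1"
  shows "w' R y > 0"
proof -
  have "- w' R y < 0"
  proof (rule neg_if_first_zeros_decreasing[where g = "\<lambda>y. - w' R y" and a = y\<^sub>1])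
    show "((\<lambda>y. - w' R y) has_real_derivative - (A * w R t + (A * t + B) * w' R t - 2 * w R t * w' R t)) (at t)"
      if "t \<ge> y\<^sub>1" for t
      using w'_has_real_derivative[OF F_nz[OF that]] by (intro derivative_intros)
    fix c assume c: "c > y\<^sub>1" "- w' R c = 0" "\<forall>t\<in>{y\<^sub>1..<c}. - w' R t < 0"
    have "w R y\<^sub>1 \<le> w R c"
    proof (rule DERIV_nonneg_imp_nondecreasing[of y\<^sub>1 c])
      fix t assume "y\<^sub>1 \<le> t" "t \<le> c"
      moreover from this have "w' R t \<ge> 0" using c by (cases "t = c") (auto intro: less_imp_le)
      ultimately have "(w R has_real_derivative w' R t) (at t) \<and> w' R t \<ge> 0"
        using w_has_real_derivative[OF F_nz] by simp
      then show "\<exists>d. (w R has_real_derivative d) (at t) \<and> 0 \<le> d" by blast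
    qed (use c in simp)
    then show "- (A * w R c + (A * c + B) * w' R c - 2 * w R c * w' R c) < 0"
      using c(2) w_pos A_pos by simp
  qed (use w'_pos y in simp_all)
  then show ?thesis by simp
qed

lemma w'_ge_if_w_between:
  assumes "0 < c" "c \<le> w R y" "w R y \<le> half_drift y" "R + K \<le> c * half_drift y"
  shows "w' R y \<ge> K"
proof -
  have "c * half_drift y \<le> w R y * (2 * half_drift y - w R y)"
    using assms by (intro mult_mono) auto
  moreover have "w' R y = w R y * (2 * half_drift y - w R y) - R"
    by (simp add: w'_def half_drift_def power2_eq_square algebra_simps)
  ultimately show ?thesis using assms(4) by linarith
qed

lemma half_drift_ge: "y \<ge> (2 * M - B) / A \<Longrightarrow> half_drift y \<ge> M"
  using A_pos by (simp add: half_drift_def divide_le_eq mult.commute)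

end

locale non_overshooting = linear_ode +
  fixes R :: real
  assumes F_pos: "y \<ge> 0 \<Longrightarrow> F R y > 0"
    and not_overshoot: "R \<notin> overshoot"
begin

lemma w_has_real_derivative_nonneg: "y \<ge> 0 \<Longrightarrow> (w R has_real_derivative w' R y) (at y)"
  using F_pos by (intro w_has_real_derivative) (metis less_irrefl)

lemma w_le_half_drift:
  assumes "y \<ge> 0" "half_drift y > 0" "(half_drift y)^2 > R + A/2"
  shows "w R y \<le> half_drift y"
proof (rule ccontr)
  assume "\<not> w R y \<le> half_drift y"
  then have "F' R y > half_drift y * F R y" using F_pos[OF assms(1)] by (simp add: w_def field_simps)
  then have "R \<in> overshoot" unfolding overshoot_def using assms F_pos by auto
  then show False using not_overshoot by simp
qed

text \<open>Otherwise \<open>w'\<close> stays bounded below by \<open>A/2 + 1\<close> while \<open>w\<close> lies under \<open>half_drift\<close>,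
  whose slope is only \<open>A/2\<close>.\<close>
lemma w'_nonpos_if_w_pos:
  assumes y\<^sub>1: "y\<^sub>1 \<ge> 0" and w_pos: "w R y\<^sub>1 > 0"
  shows "w' R y\<^sub>1 \<le> 0"
proof (rule ccontr)
  assume "\<not> w' R y\<^sub>1 \<le> 0"
  then have w'_pos: "w' R y > 0" if "y \<ge> y\<^sub>1" for y
    using w'_pos_persists[OF _ w_pos _ that] F_pos y\<^sub>1 by (metis less_irrefl not_le order_trans)
  have w_ge: "w R y\<^sub>1 \<le> w R y" if "y \<ge> y\<^sub>1" for y
    using that y\<^sub>1 w_has_real_derivative_nonneg w'_pos
    by (intro DERIV_nonneg_imp_nondecreasing[OF that]) (meson less_imp_le order_trans)
  define K where "K = R + A/2 + 1"
  define M where "M = max (max 1 K) (K / w R y\<^sub>1)"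
  define Y where "Y = max y\<^sub>1 ((2 * M - B) / A)"
  have Y: "Y \<ge> y\<^sub>1" "Y \<ge> 0" using y\<^sub>1 by (auto simp: Y_def)
  have between: "w R y\<^sub>1 \<le> w R y \<and> w R y \<le> half_drift y \<and> R + (A/2 + 1) \<le> w R y\<^sub>1 * half_drift y"
    if "y \<ge> Y" for y
  proof -
    have L: "half_drift y \<ge> M" using that by (intro half_drift_ge) (simp add: Y_def)
    then have "half_drift y \<ge> 1" "half_drift y \<ge> K" "half_drift y \<ge> K / w R y\<^sub>1"
      by (auto simp: M_def)
    moreover from this have "(half_drift y)^2 \<ge> half_drift y" by (simp add: power2_eq_square)
    ultimately show ?thesis
      using w_ge[of y] w_le_half_drift[of y] that Y w_pos
      by (auto simp: K_def divide_le_eq mult.commute)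
  qed
  define h where "h = (\<lambda>y. w R y - half_drift y - y)"
  have h_mono: "h Y \<le> h y" if "y \<ge> Y" for y
  proof (rule DERIV_nonneg_imp_nondecreasing[OF that])
    fix t assume t: "Y \<le> t" "t \<le> y"
    have "(h has_real_derivative w' R t - A/2 - 1) (at t)"
      unfolding h_def half_drift_def[abs_def]
      by (rule derivative_eq_intros w_has_real_derivative_nonneg refl | use t Y in simp)+
    moreover have "w' R t \<ge> A/2 + 1"
      using between[of t] t w_pos by (intro w'_ge_if_w_between[of "w R y\<^sub>1"]) auto
    ultimately show "\<exists>d. (h has_real_derivative d) (at t) \<and> 0 \<le> d" by force
  qed
  define y where "y = Y + \<bar>h Y\<bar> + 1"
  have "y \<ge> Y" by (simp add: y_def)
  then have "h y \<ge> h Y" "w R y \<le> half_drift y" using h_mono between by auto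
  then show False using Y(2) by (simp add: h_def y_def)
qed

end

context linear_ode
begin

lemma zero_in_overshoot:
  assumes \<rho>_pos: "\<rho> > 0"
  shows "0 \<in> overshoot"
proof (rule ccontr)
  assume not_overshoot: "0 \<notin> overshoot"
  define E where "E = (\<lambda>y::real. F' 0 y * exp (- (A * y^2 / 2 + B * y)))"
  have "(E has_real_derivative 0) (at y)" for y
  proof -
    have "(E has_real_derivative F'' 0 y * exp (- (A * y^2 / 2 + B * y))
        + F' 0 y * (exp (- (A * y^2 / 2 + B * y)) * (- (A * (2 * y) / 2 + B)))) (at y)"
      unfolding E_def by (rule derivative_eq_intros F'_has_real_derivative refl | simp)+
    then show ?thesis unfolding F_ode by (simp add: algebra_simps)
  qed
  then have "E y = E 0" for y using DERIV_isconst_all by blast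
  then have F'_pos: "F' 0 y > 0" for y
    using \<rho>_pos by (simp add: E_def F'_at_0) (metis exp_gt_zero zero_less_mult_pos2)
  have F_pos: "F 0 y > 0" if "y \<ge> 0" for y
  proof -
    have "F 0 0 \<le> F 0 y"
      by (rule DERIV_nonneg_imp_nondecreasing[OF that])
         (use F_has_real_derivative F'_pos less_imp_le in blast)
    then show ?thesis by (simp add: F_at_0)
  qed
  interpret non_overshooting A B \<rho> 0
    by unfold_locales (use F_pos not_overshoot in auto)
  define y\<^sub>1 where "y\<^sub>1 = max 0 ((2 * (A/2 + 2) - B) / A)"
  have y\<^sub>1: "y\<^sub>1 \<ge> 0" and L: "half_drift y\<^sub>1 \<ge> A/2 + 2"
    by (auto simp: y\<^sub>1_def intro: half_drift_ge)
  moreover have "half_drift y\<^sub>1 * 1 \<le> half_drift y\<^sub>1 * half_drift y\<^sub>1"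
    using L A_pos by (intro mult_left_mono) auto
  ultimately have "(half_drift y\<^sub>1)^2 > 0 + A/2" by (simp add: power2_eq_square)
  then have w_le: "w 0 y\<^sub>1 \<le> half_drift y\<^sub>1" using y\<^sub>1 L A_pos by (intro w_le_half_drift) auto
  have w_pos: "w 0 y\<^sub>1 > 0" using F'_pos F_pos[OF y\<^sub>1] by (simp add: w_def)
  have "w' 0 y\<^sub>1 = w 0 y\<^sub>1 * (2 * half_drift y\<^sub>1 - w 0 y\<^sub>1)"
    by (simp add: w'_def half_drift_def power2_eq_square algebra_simps)
  also have "\<dots> > 0" using w_pos w_le L A_pos by simp
  finally show False using w'_nonpos_if_w_pos[OF y\<^sub>1 w_pos] by simp
qed

lemma large_in_sign_change: "((A + \<bar>B\<bar>)/2)^2 + pi^2 \<in> sign_change"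
proof (rule ccontr)
  define R where "R = ((A + \<bar>B\<bar>)/2)^2 + pi^2"
  assume "R \<notin> sign_change"
  then have nonneg: "F R y \<ge> 0" if "y \<ge> 0" for y using that by (auto simp: sign_change_def not_less)
  obtain y where y: "y \<in> {0..1}" "F R y \<le> 0"
    using F_nonpos_on_unit_interval[of R] by (auto simp: R_def)
  then show False using F_pos_if_nonneg[OF nonneg, of y] by simp
qed

lemma F_exp_has_real_derivative:
  "((\<lambda>y. F R y * exp (- (A * y^2 / 4 + B * y / 2))) has_real_derivative
     - (half_drift y * F R y - F' R y) * exp (- (A * y^2 / 4 + B * y / 2))) (at y)"
proof -
  have "((\<lambda>y. F R y * exp (- (A * y^2 / 4 + B * y / 2))) has_real_derivative
      F' R y * exp (- (A * y^2 / 4 + B * y / 2))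
      + F R y * (exp (- (A * y^2 / 4 + B * y / 2)) * (- (A * (2 * y) / 4 + B / 2)))) (at y)"
    by (rule derivative_eq_intros F_has_real_derivative refl | simp)+
  then show ?thesis by (rule DERIV_cong) (simp add: half_drift_def field_simps)
qed

lemma half_drift_F_minus_F'_has_real_derivative:
  "((\<lambda>y. half_drift y * F R y - F' R y) has_real_derivative
     (A/2 + R) * F R y - half_drift y * F' R y) (at y)"
proof -
  have "((\<lambda>y. half_drift y * F R y - F' R y) has_real_derivative
      A * F R y / 2 + half_drift y * F' R y - F'' R y) (at y)"
    unfolding half_drift_def
    by (rule derivative_eq_intros F_has_real_derivative F'_has_real_derivative refl | simp)+
  then show ?thesis by (rule DERIV_cong) (simp add: F_ode half_drift_def field_simps)
qed

text \<open>\<open>half_drift * F - F'\<close> cannot return to zero while \<open>half_drift\<^sup>2 > R + A/2\<close>: at such a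
  zero its derivative is \<open>(A/2 + R - half_drift\<^sup>2) * F < 0\<close>.\<close>
lemma F_pos_after_overshoot:
  assumes y\<^sub>1: "half_drift y\<^sub>1 > 0" "(half_drift y\<^sub>1)^2 > R + A/2" "F R y\<^sub>1 > 0"
      "F' R y\<^sub>1 > half_drift y\<^sub>1 * F R y\<^sub>1"
    and y: "y \<ge> y\<^sub>1"
  shows "F R y > 0"
proof -
  define g where "g = (\<lambda>y. half_drift y * F R y - F' R y)"
  define k where "k = (\<lambda>y. F R y * exp (- (A * y^2 / 4 + B * y / 2)))"
  have k': "(k has_real_derivative - g y * exp (- (A * y^2 / 4 + B * y / 2))) (at y)" for y
    unfolding k_def g_def by (rule F_exp_has_real_derivative)
  have g': "(g has_real_derivative (A/2 + R) * F R y - half_drift y * F' R y) (at y)" for y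
    unfolding g_def by (rule half_drift_F_minus_F'_has_real_derivative)
  have k_mono: "k a \<le> k b" if "a \<le> b" "\<And>t. a \<le> t \<Longrightarrow> t \<le> b \<Longrightarrow> g t \<le> 0" for a b
    using that k' by (intro DERIV_nonneg_imp_nondecreasing[OF that(1)])
      (metis exp_ge_zero mult_nonneg_nonneg neg_0_le_iff_le mult_minus_left)
  have k_pos: "k y\<^sub>1 > 0" using y\<^sub>1 by (simp add: k_def)
  have g_neg: "g y < 0" if "y \<ge> y\<^sub>1" for y
  proof (rule neg_if_first_zeros_decreasing[OF g' _ _ that])
    show "g y\<^sub>1 < 0" using y\<^sub>1 by (simp add: g_def)
    fix c assume c: "c > y\<^sub>1" "g c = 0" "\<forall>t\<in>{y\<^sub>1..<c}. g t < 0"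
    have "k y\<^sub>1 \<le> k c" by (rule k_mono) (use c in \<open>auto simp: le_less\<close>)
    then have "k c > 0" using k_pos by simp
    then have F_c: "F R c > 0" by (simp add: k_def zero_less_mult_iff)
    have "half_drift y\<^sub>1 \<le> half_drift c" using c A_pos by (simp add: half_drift_def)
    then have "(half_drift y\<^sub>1)^2 \<le> (half_drift c)^2" using y\<^sub>1(1) by (intro power_mono) auto
    then have "(half_drift c)^2 > R + A/2" using y\<^sub>1(2) by simp
    moreover have "F' R c = half_drift c * F R c" using c(2) by (simp add: g_def)
    then have "(A/2 + R) * F R c - half_drift c * F' R c = (A/2 + R - (half_drift c)^2) * F R c"
      by (simp add: power2_eq_square algebra_simps)
    ultimately show "(A/2 + R) * F R c - half_drift c * F' R c < 0"
      using F_c by (simp add: mult_neg_pos)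
  qed
  have "k y\<^sub>1 \<le> k y" using y g_neg by (intro k_mono) (auto intro: less_imp_le)
  then have "k y > 0" using k_pos by simp
  then show ?thesis by (simp add: k_def zero_less_mult_iff)
qed

lemma overshoot_disjoint_sign_change: "overshoot \<inter> sign_change = {}"
proof -
  have "F R y \<ge> 0" if R: "R \<in> overshoot" and y: "y \<ge> 0" for R y
  proof -
    obtain y\<^sub>1 where "y\<^sub>1 \<ge> 0" "half_drift y\<^sub>1 > 0" "(half_drift y\<^sub>1)^2 > R + A/2"
      "\<forall>t\<in>{0..y\<^sub>1}. F R t > 0" "F' R y\<^sub>1 > half_drift y\<^sub>1 * F R y\<^sub>1"
      using R by (auto simp: overshoot_def)
    then show ?thesis using F_pos_after_overshoot[of y\<^sub>1 R y] y
      by (cases "y \<le> y\<^sub>1") (auto intro: less_imp_le)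
  qed
  then show ?thesis by (force simp: sign_change_def)
qed

lemma exists_critical_parameter:
  assumes "\<rho> > 0"
  obtains R where "R > 0" "\<And>y. y \<ge> 0 \<Longrightarrow> F R y > 0" "R \<notin> overshoot"
proof -
  define R\<^sub>1 where "R\<^sub>1 = ((A + \<bar>B\<bar>)/2)^2 + pi^2"
  have "R\<^sub>1 > 0" unfolding R\<^sub>1_def by (simp add: add_nonneg_pos)
  have "\<not> {0..R\<^sub>1} \<subseteq> overshoot \<union> sign_change"
  proof
    assume "{0..R\<^sub>1} \<subseteq> overshoot \<union> sign_change"
    from connectedD[OF connected_Icc open_overshoot open_sign_change _ this]
    show False using zero_in_overshoot[OF assms] large_in_sign_change overshoot_disjoint_sign_change
        \<open>R\<^sub>1 > 0\<close> by (auto simp: R\<^sub>1_def)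
  qed
  then obtain R where R: "R \<in> {0..R\<^sub>1}" "R \<notin> overshoot" "R \<notin> sign_change" by blast
  have "R \<noteq> 0" using R zero_in_overshoot[OF assms] by auto
  with R(1) have "R > 0" by simp
  moreover have "F R y > 0" if "y \<ge> 0" for y
    using R(3) that by (intro F_pos_if_nonneg) (auto simp: sign_change_def not_less)
  ultimately show ?thesis using that R(2) by simp
qed

end

locale critical = non_overshooting +
  assumes R_pos: "R > 0"
begin

text \<open>Once \<open>w \<le> 0\<close> it stays negative, and as soon as \<open>A * y + B \<ge> 0\<close> we get \<open>w' \<le> - w\<^sup>2\<close>,
  so \<open>w\<close> would blow up in finite time.\<close>
lemma w_pos:
  assumes y\<^sub>1: "y\<^sub>1 \<ge> 0"
  shows "w R y\<^sub>1 > 0"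
proof (rule ccontr)
  assume "\<not> w R y\<^sub>1 > 0"
  then have w_le: "w R y\<^sub>1 \<le> 0" by simp
  have w_neg: "w R y < 0" if "y > y\<^sub>1" for y
  proof (rule neg_if_zeros_decreasing[where g = "w R" and g' = "w' R", OF _ w_le _ that])
    show "(w R has_real_derivative w' R t) (at t)" if "t \<ge> y\<^sub>1" for t
      using that y\<^sub>1 by (intro w_has_real_derivative_nonneg) simp
    show "w' R c < 0" if "w R c = 0" for c
      using that R_pos by (simp add: w'_def)
  qed
  define y\<^sub>2 where "y\<^sub>2 = max (y\<^sub>1 + 1) (- B / A)"
  have y\<^sub>2: "y\<^sub>2 > y\<^sub>1" by (simp add: y\<^sub>2_def)
  define u where "u = (\<lambda>y. y - inverse (w R y))"
  have u_antimono: "u y \<le> u y\<^sub>2" if "y \<ge> y\<^sub>2" for y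
  proof (rule DERIV_nonpos_imp_nonincreasing[OF that])
    fix t assume t: "y\<^sub>2 \<le> t" "t \<le> y"
    have w_t: "w R t < 0" using w_neg[of t] t y\<^sub>2 by simp
    have w'_t: "(w R has_real_derivative w' R t) (at t)" by (rule w_has_real_derivative_nonneg) (use t y\<^sub>1 y\<^sub>2 in simp)
    have "(u has_real_derivative 1 - - (w' R t * inverse (w R t ^ Suc (Suc 0)))) (at t)"
      unfolding u_def using w_t by (intro DERIV_diff DERIV_ident DERIV_inverse_fun w'_t) simp
    then have u': "(u has_real_derivative 1 + w' R t / (w R t)^2) (at t)"
      by (simp add: divide_inverse power2_eq_square)
    have "t \<ge> (2 * 0 - B) / A" using t by (simp add: y\<^sub>2_def)
    then have "A * t + B \<ge> 0" using half_drift_ge[of 0 t] by (simp add: half_drift_def)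
    then have "(A * t + B) * w R t \<le> 0" using w_t by (simp add: mult_nonneg_nonpos)
    then have "w' R t \<le> - ((w R t)^2)" using R_pos by (simp add: w'_def)
    moreover have "(w R t)^2 > 0" using w_t by simp
    ultimately have "w' R t / (w R t)^2 \<le> -1" by (simp add: pos_divide_le_eq)
    then show "\<exists>d. (u has_real_derivative d) (at t) \<and> d \<le> 0" using u' by force
  qed
  define y\<^sub>3 where "y\<^sub>3 = y\<^sub>2 - inverse (w R y\<^sub>2) + 1"
  have "inverse (w R y\<^sub>2) < 0" using w_neg[OF y\<^sub>2] by simp
  then have "y\<^sub>3 \<ge> y\<^sub>2" unfolding y\<^sub>3_def by linarith
  then have "u y\<^sub>3 \<le> u y\<^sub>2" by (rule u_antimono)
  then have "- inverse (w R y\<^sub>3) \<le> -1" unfolding u_def y\<^sub>3_def by linarith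
  moreover have "inverse (w R y\<^sub>3) < 0" using w_neg \<open>y\<^sub>3 \<ge> y\<^sub>2\<close> y\<^sub>2 by simp
  ultimately show False by linarith
qed

lemma w'_neg:
  assumes y\<^sub>1: "y\<^sub>1 \<ge> 0"
  shows "w' R y\<^sub>1 < 0"
proof (rule ccontr)
  assume "\<not> w' R y\<^sub>1 < 0"
  then have w'_zero: "w' R y\<^sub>1 = 0" using w'_nonpos_if_w_pos[OF y\<^sub>1 w_pos[OF y\<^sub>1]] by simp
  have "F R y\<^sub>1 \<noteq> 0" using F_pos[OF y\<^sub>1] by simp
  from DERIV_pos_inc_right[OF w'_has_real_derivative[OF this]]
  obtain d where d: "d > 0" "\<And>h. h > 0 \<Longrightarrow> h < d \<Longrightarrow> w' R y\<^sub>1 < w' R (y\<^sub>1 + h)"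
    using w'_zero w_pos[OF y\<^sub>1] A_pos by force
  then have "w' R (y\<^sub>1 + d/2) > 0" using w'_zero by simp
  moreover have "y\<^sub>1 + d/2 \<ge> 0" using y\<^sub>1 d(1) by simp
  ultimately show False using w'_nonpos_if_w_pos[OF _ w_pos] by (meson not_le)
qed

lemma w_antimono:
  assumes "0 \<le> a" "a \<le> b"
  shows "w R b \<le> w R a"
proof (rule DERIV_nonpos_imp_nonincreasing[OF assms(2)])
  fix t assume "a \<le> t"
  with assms(1) show "\<exists>d. (w R has_real_derivative d) (at t) \<and> d \<le> 0"
    using w_has_real_derivative_nonneg[of t] w'_neg[of t] by force
qed

text \<open>If \<open>w \<ge> e > 0\<close> throughout, then \<open>w' \<ge> (A * y + B) * e - R - (w R 0)\<^sup>2\<close> would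
  become positive.\<close>
lemma w_tendsto_0: "(w R \<longlongrightarrow> 0) at_top"
proof (rule order_tendstoI)
  fix a :: real assume "a < 0"
  then show "eventually (\<lambda>y. a < w R y) at_top"
    using w_pos by (intro eventually_at_top_linorderI[of 0]) (meson less_trans)
next
  fix e :: real assume e: "e > 0"
  have "\<exists>Y\<ge>0. w R Y < e"
  proof (rule ccontr)
    assume "\<not> (\<exists>Y\<ge>0. w R Y < e)"
    then have w_ge: "w R y \<ge> e" if "y \<ge> 0" for y using that by (auto simp: not_less)
    define C where "C = R + (w R 0)^2 + 1"
    define y where "y = max 0 ((2 * (C / e / 2) - B) / A)"
    have y: "y \<ge> 0" by (simp add: y_def)
    have "half_drift y \<ge> C / e / 2" by (rule half_drift_ge) (simp add: y_def)
    then have "A * y + B \<ge> C / e" by (simp add: half_drift_def)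
    then have drift: "(A * y + B) * e \<ge> C" using e by (simp add: divide_le_eq)
    moreover have "(A * y + B) * w R y \<ge> (A * y + B) * e"
    proof (rule mult_left_mono)
      show "A * y + B \<ge> 0"
    proof (rule ccontr)
      assume "\<not> A * y + B \<ge> 0"
      then have "(A * y + B) * e \<le> 0" using e by (simp add: mult_nonpos_nonneg)
      moreover have "C > 0" using R_pos by (simp add: C_def add_pos_nonneg)
      ultimately show False using drift by simp
    qed
    qed (use w_ge y in simp)
    moreover have "(w R y)^2 \<le> (w R 0)^2"
      using w_antimono[of 0 y] y w_ge[OF y] e by (intro power_mono) auto
    ultimately have "w' R y \<ge> 1" by (simp add: w'_def C_def)
    then show False using w'_neg[OF y] by simp
  qed
  then obtain Y where "Y \<ge> 0" "w R Y < e" by blast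
  then show "eventually (\<lambda>y. w R y < e) at_top"
    using w_antimono by (intro eventually_at_top_linorderI[of Y]) (meson le_less_trans)
qed

lemma continuous_on_w': "continuous_on {0..} (w' R)"
proof (rule DERIV_continuous_on)
  fix y :: real assume "y \<in> {0..}"
  then have "F R y \<noteq> 0" using F_pos by force
  then show "(w' R has_field_derivative (A * w R y + (A * y + B) * w' R y - 2 * w R y * w' R y))
      (at y within {0..})"
    by (rule has_field_derivative_at_within[OF w'_has_real_derivative])
qed

end

lemma riccati_substitution:
  fixes \<sigma> \<eta> \<alpha> h a R W W' y :: real
  assumes "\<sigma> > 0" "\<eta> > 0" "\<alpha> > 0"
  defines "k \<equiv> 2 * \<sigma>\<^sup>2 / \<alpha>" and "H \<equiv> h / \<eta>"
  assumes W': "W' = (2 * \<eta> / \<sigma>\<^sup>2 * y + (\<alpha> * H - 2 * a) / \<sigma>\<^sup>2) * W - R - W\<^sup>2"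
  shows "(\<sigma>\<^sup>2)\<^sup>2 / \<alpha> * R + H * (a - \<alpha> * H / 4)
    = - (\<alpha> / 4) * (H - k * W)\<^sup>2 + (1/2) * \<sigma>\<^sup>2 * (- k * W')
      - \<eta> * y * (H - k * W) + a * (H - k * W) + h * y"
  using assms(1-3) unfolding W' k_def H_def by (simp add: field_simps power2_eq_square)

theorem theorem1:
  fixes \<sigma> \<eta> \<alpha> h r a :: real
  assumes "\<sigma> > 0" "\<eta> > 0" "\<alpha> > 0" "h > 0" "r \<ge> 0"
  shows "\<exists>\<beta> v v'. \<beta> > 0 \<and>
     (\<forall>y\<ge>0. (v has_real_derivative v' y) (at y within {0..})) \<and>
     continuous_on {0..} v' \<and>
     (\<forall>y\<ge>0. \<beta> = - (\<alpha> / 4) * (v y)\<^sup>2 + (1/2) * \<sigma>\<^sup>2 * v' y - \<eta> * y * v y + a * v y + h * y) \<and>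
     v 0 = - r \<and>
     mono_on {0..} v \<and>
     (v \<longlongrightarrow> h / \<eta>) at_top"
proof -
  define k where "k = 2 * \<sigma>\<^sup>2 / \<alpha>"
  define \<rho> where "\<rho> = (h / \<eta> + r) / k"
  have "k > 0" using assms by (simp add: k_def)
  moreover have "h / \<eta> + r > 0" using assms by (simp add: add_pos_nonneg)
  ultimately have "\<rho> > 0" by (simp add: \<rho>_def)
  interpret linear_ode "2 * \<eta> / \<sigma>\<^sup>2" "(\<alpha> * (h / \<eta>) - 2 * a) / \<sigma>\<^sup>2" \<rho>
    by unfold_locales (use assms in simp)
  obtain R where "R > 0" "\<And>y. y \<ge> 0 \<Longrightarrow> F R y > 0" "R \<notin> overshoot"
    using exists_critical_parameter[OF \<open>\<rho> > 0\<close>] by blast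
  then interpret critical "2 * \<eta> / \<sigma>\<^sup>2" "(\<alpha> * (h / \<eta>) - 2 * a) / \<sigma>\<^sup>2" \<rho> R
    by unfold_locales auto
  define v where "v y = h / \<eta> - k * w R y" for y
  define v' where "v' y = - k * w' R y" for y
  define \<beta> where "\<beta> = (\<sigma>\<^sup>2)\<^sup>2 / \<alpha> * R + h / \<eta> * (a - \<alpha> * (h / \<eta>) / 4)"
  have v_deriv: "(v has_real_derivative v' y) (at y)" if "y \<ge> 0" for y
    unfolding v_def[abs_def] v'_def
    by (rule derivative_eq_intros w_has_real_derivative_nonneg[OF that] refl | simp)+
  have riccati:
    "\<beta> = - (\<alpha> / 4) * (v y)\<^sup>2 + (1/2) * \<sigma>\<^sup>2 * v' y - \<eta> * y * v y + a * v y + h * y" for y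
    unfolding \<beta>_def v_def v'_def k_def w'_def by (rule riccati_substitution) (use assms in simp_all)
  have "(v \<longlongrightarrow> h / \<eta> - k * 0) at_top"
    unfolding v_def by (intro tendsto_intros w_tendsto_0)
  then have v_lim: "(v \<longlongrightarrow> h / \<eta>) at_top" by simp
  have v_0: "v 0 = - r" unfolding v_def w_at_0 using \<open>k > 0\<close> by (simp add: \<rho>_def)
  have "continuous_on {0..} v"
    using v_deriv by (intro DERIV_continuous_on) (auto intro: has_field_derivative_at_within)
  then obtain c where "c \<ge> 0" "v c = 0"
    using exists_zero_if_tendsto_pos v_0 v_lim assms by (metis divide_pos_pos neg_le_0_iff_le)
  then have "\<beta> = (1/2) * \<sigma>\<^sup>2 * v' c + h * c" using riccati[of c] by simp
  moreover have "v' c > 0" using w'_neg[OF \<open>c \<ge> 0\<close>] \<open>k > 0\<close> by (simp add: v'_def mult_pos_neg)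
  ultimately have "\<beta> > 0" using assms \<open>c \<ge> 0\<close> by (simp add: add_pos_nonneg)
  moreover have "mono_on {0..} v"
    using w_antimono \<open>k > 0\<close> by (intro mono_onI) (simp add: v_def mult_left_mono)
  moreover have "continuous_on {0..} v'"
    unfolding v'_def[abs_def] by (intro continuous_intros continuous_on_w')
  ultimately show ?thesis
    using v_deriv riccati v_0 v_lim by (intro exI[of _ \<beta>] exI[of _ v] exI[of _ v'])
      (auto intro: has_field_derivative_at_within)
qed

end
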